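(* Let $\mu\in V_n$. Then (i) $\operatorname{tr}(\mathrm M_\mu D)=0$ for every $D\in\mathrm{Der}(\mu)$; (ii) $\operatorname{tr}(\mathrm M_\mu[A,A^*])\ge 0$ for every $A\in\mathrm{Der}(\mu)$, with equality if and only if $A^*\in\mathrm{Der}(\mu)$.
   Context: $V_n$ is the space of bilinear maps $\mu:\mathbb C^n\times\mathbb C^n\to\mathbb C^n$; $\mathbb C^n$ has its standard Hermitian inner product and $A^*$ is the adjoint. $\mathrm{Der}(\mu)=\{D\in\mathfrak{gl}(n): D\mu(X,Y)=\mu(DX,Y)+\mu(X,DY)\ \forall X,Y\}$. For $X\in\mathbb C^n$, $L^\mu_X Y=\mu(X,Y)$, $R^\mu_X Y=\mu(Y,X)$, and for an orthonormal basis $\{X_i\}$ of $\mathbb C^n$, $\mathrm M_\mu=2\sum_i L^\mu_{X_i}(L^\mu_{X_i})^*-2\sum_i (L^\mu_{X_i})^*L^\mu_{X_i}-2\sum_i (R^\mu_{X_i})^*R^\mu_{X_i}$. *)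

theory Defs
  imports "HOL-Analysis.Analysis" "HOL-Library.Complex_Order"
begin

definition cbilinear :: "(complex^'n \<Rightarrow> complex^'n \<Rightarrow> complex^'n) \<Rightarrow> bool" where
  "cbilinear mu \<longleftrightarrow>
     (\<forall>X1 X2 Y. mu (X1 + X2) Y = mu X1 Y + mu X2 Y) \<and>
     (\<forall>c X Y. mu (c *s X) Y = c *s mu X Y) \<and>
     (\<forall>X Y1 Y2. mu X (Y1 + Y2) = mu X Y1 + mu X Y2) \<and>
     (\<forall>c X Y. mu X (c *s Y) = c *s mu X Y)"

definition Vn :: "(complex^'n \<Rightarrow> complex^'n \<Rightarrow> complex^'n) set" where
  "Vn = {mu. cbilinear mu}"

definition adj :: "complex^'n^'n \<Rightarrow> complex^'n^'n" where
  "adj A = (\<chi> i j. cnj (A $ j $ i))"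

definition Der :: "(complex^'n \<Rightarrow> complex^'n \<Rightarrow> complex^'n) \<Rightarrow> (complex^'n^'n) set" where
  "Der mu = {D. \<forall>X Y. D *v mu X Y = mu (D *v X) Y + mu X (D *v Y)}"

definition Lop :: "(complex^'n \<Rightarrow> complex^'n \<Rightarrow> complex^'n) \<Rightarrow> complex^'n \<Rightarrow> complex^'n^'n" where
  "Lop mu X = (\<chi> i j. mu X (axis j 1) $ i)"

definition Rop :: "(complex^'n \<Rightarrow> complex^'n \<Rightarrow> complex^'n) \<Rightarrow> complex^'n \<Rightarrow> complex^'n^'n" where
  "Rop mu X = (\<chi> i j. mu (axis j 1) X $ i)"

definition Mmu :: "(complex^'n \<Rightarrow> complex^'n \<Rightarrow> complex^'n) \<Rightarrow> complex^'n^'n" where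
  "Mmu mu =
     2 *\<^sub>R (\<Sum>k\<in>UNIV. Lop mu (axis k 1) ** adj (Lop mu (axis k 1)))
   - 2 *\<^sub>R (\<Sum>k\<in>UNIV. adj (Lop mu (axis k 1)) ** Lop mu (axis k 1))
   - 2 *\<^sub>R (\<Sum>k\<in>UNIV. adj (Rop mu (axis k 1)) ** Rop mu (axis k 1))"

end

theory Submission
  imports Defs "HOL-Library.Function_Algebras"
begin

text \<open>
  Identify \<open>\<mu>\<close> with its structure constants \<open>v i a b = \<mu>(e\<^sub>a, e\<^sub>b)\<^sub>i\<close>, a vector of
  \<open>n\<^sup>3\<close> complex numbers with the standard Hermitian product. The derivative of the
  natural \<open>GL\<^sub>n\<close>-action, \<open>\<pi>(D)\<mu> = D\<mu> - \<mu>(D\<cdot>,\<cdot>) - \<mu>(\<cdot>,D\<cdot>)\<close>, is a Lie algebra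
  representation with \<open>\<pi>(D)\<^sup>* = \<pi>(D\<^sup>*)\<close>; \<open>D\<close> is a derivation iff \<open>\<pi>(D)\<mu> = 0\<close>, and
  \<open>M\<^sub>\<mu>\<close> is the moment map: \<open>tr(M\<^sub>\<mu>D) = 2\<langle>\<pi>(D)\<mu>, \<mu>\<rangle>\<close>. This gives (i) at once, and
  for a derivation \<open>A\<close>, \<open>tr(M\<^sub>\<mu>[A,A\<^sup>*]) = 2\<langle>\<pi>(A)\<pi>(A\<^sup>*)\<mu>, \<mu>\<rangle> = 2|\<pi>(A\<^sup>*)\<mu>|\<^sup>2\<close>, which
  vanishes iff \<open>A\<^sup>*\<close> is a derivation.
\<close>

type_synonym 'n tensor = "'n \<Rightarrow> 'n \<Rightarrow> 'n \<Rightarrow> complex"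

definition act_out :: "complex^'n^'n \<Rightarrow> 'n::finite tensor \<Rightarrow> 'n tensor" where
  "act_out D x = (\<lambda>i a b. \<Sum>l\<in>UNIV. D$i$l * x l a b)"

definition act_left :: "complex^'n^'n \<Rightarrow> 'n::finite tensor \<Rightarrow> 'n tensor" where
  "act_left D x = (\<lambda>i a b. \<Sum>p\<in>UNIV. D$p$a * x i p b)"

definition act_right :: "complex^'n^'n \<Rightarrow> 'n::finite tensor \<Rightarrow> 'n tensor" where
  "act_right D x = (\<lambda>i a b. \<Sum>q\<in>UNIV. D$q$b * x i a q)"

definition gl_action :: "complex^'n^'n \<Rightarrow> 'n::finite tensor \<Rightarrow> 'n tensor" where
  "gl_action D x = act_out D x - act_left D x - act_right D x"

definition tensor_inner :: "'n::finite tensor \<Rightarrow> 'n tensor \<Rightarrow> complex" where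
  "tensor_inner x y = (\<Sum>i\<in>UNIV. \<Sum>a\<in>UNIV. \<Sum>b\<in>UNIV. x i a b * cnj (y i a b))"

definition structure_tensor :: "(complex^'n \<Rightarrow> complex^'n \<Rightarrow> complex^'n) \<Rightarrow> 'n tensor" where
  "structure_tensor mu = (\<lambda>i a b. mu (axis a 1) (axis b 1) $ i)"

lemma sum_rotate3:
  "(\<Sum>a\<in>A. \<Sum>b\<in>B. \<Sum>c\<in>C. f a b c) = (\<Sum>c\<in>C. \<Sum>a\<in>A. \<Sum>b\<in>B. f a b c)"
proof -
  have "(\<Sum>a\<in>A. \<Sum>b\<in>B. \<Sum>c\<in>C. f a b c) = (\<Sum>a\<in>A. \<Sum>c\<in>C. \<Sum>b\<in>B. f a b c)"
    by (intro sum.cong refl) (rule sum.swap)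
  also have "\<dots> = (\<Sum>c\<in>C. \<Sum>a\<in>A. \<Sum>b\<in>B. f a b c)"
    by (rule sum.swap)
  finally show ?thesis .
qed

subsection \<open>The Lie algebra representation on tensors\<close>

lemma act_out_diff: "act_out D (x - y) = act_out D x - act_out D y"
  and act_left_diff: "act_left D (x - y) = act_left D x - act_left D y"
  and act_right_diff: "act_right D (x - y) = act_right D x - act_right D y"
  by (simp_all add: act_out_def act_left_def act_right_def fun_eq_iff
      sum_subtractf right_diff_distrib)

lemma act_out_matrix_diff: "act_out (A - B) x = act_out A x - act_out B x"
  and act_left_matrix_diff: "act_left (A - B) x = act_left A x - act_left B x"
  and act_right_matrix_diff: "act_right (A - B) x = act_right A x - act_right B x"
  by (simp_all add: act_out_def act_left_def act_right_def fun_eq_iff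
      sum_subtractf left_diff_distrib)

lemma act_out_act_out: "act_out A (act_out B x) = act_out (A ** B) x"
proof -
  have "(\<Sum>l\<in>UNIV. A$i$l * (\<Sum>m\<in>UNIV. B$l$m * x m a b))
      = (\<Sum>m\<in>UNIV. (\<Sum>l\<in>UNIV. A$i$l * B$l$m) * x m a b)" for i a b
    by (simp add: sum_distrib_left sum_distrib_right mult.assoc) (rule sum.swap)
  thus ?thesis by (simp add: act_out_def fun_eq_iff matrix_matrix_mult_def)
qed

lemma act_left_act_left: "act_left A (act_left B x) = act_left (B ** A) x"
proof -
  have "(\<Sum>p\<in>UNIV. A$p$a * (\<Sum>q\<in>UNIV. B$q$p * x i q b))
      = (\<Sum>q\<in>UNIV. (\<Sum>p\<in>UNIV. B$q$p * A$p$a) * x i q b)" for i a b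
    by (simp add: sum_distrib_left sum_distrib_right ac_simps) (rule sum.swap)
  thus ?thesis by (simp add: act_left_def fun_eq_iff matrix_matrix_mult_def)
qed

lemma act_right_act_right: "act_right A (act_right B x) = act_right (B ** A) x"
proof -
  have "(\<Sum>p\<in>UNIV. A$p$b * (\<Sum>q\<in>UNIV. B$q$p * x i a q))
      = (\<Sum>q\<in>UNIV. (\<Sum>p\<in>UNIV. B$q$p * A$p$b) * x i a q)" for i a b
    by (simp add: sum_distrib_left sum_distrib_right ac_simps) (rule sum.swap)
  thus ?thesis by (simp add: act_right_def fun_eq_iff matrix_matrix_mult_def)
qed

lemma act_left_act_out_commute: "act_left B (act_out A x) = act_out A (act_left B x)"
  and act_right_act_out_commute: "act_right B (act_out A x) = act_out A (act_right B x)"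
  and act_right_act_left_commute: "act_right B (act_left A x) = act_left A (act_right B x)"
  unfolding act_out_def act_left_def act_right_def
  by (intro ext, simp add: sum_distrib_left ac_simps, rule sum.swap)+

text \<open>The input-slot actions compose in reverse order, which is exactly compensated by
  their minus signs in the definition of the action.\<close>

lemma gl_action_commutator:
  "gl_action A (gl_action B x) - gl_action B (gl_action A x) = gl_action (A ** B - B ** A) x"
  unfolding gl_action_def
  by (simp add: act_out_diff act_left_diff act_right_diff act_out_matrix_diff
      act_left_matrix_diff act_right_matrix_diff act_out_act_out act_left_act_left
      act_right_act_right act_left_act_out_commute act_right_act_out_commute
      act_right_act_left_commute)

lemma gl_action_zero [simp]: "gl_action D 0 = 0"
  by (simp add: gl_action_def act_out_def act_left_def act_right_def fun_eq_iff)

lemma tensor_inner_diff_left: "tensor_inner (x - y) z = tensor_inner x z - tensor_inner y z"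
  by (simp add: tensor_inner_def sum_subtractf left_diff_distrib)

lemma tensor_inner_diff_right: "tensor_inner x (y - z) = tensor_inner x y - tensor_inner x z"
  by (simp add: tensor_inner_def sum_subtractf right_diff_distrib)

lemma tensor_inner_zero_left [simp]: "tensor_inner 0 y = 0"
  by (simp add: tensor_inner_def)

lemma tensor_inner_self:
  "tensor_inner w w = complex_of_real (\<Sum>i\<in>UNIV. \<Sum>a\<in>UNIV. \<Sum>b\<in>UNIV. (cmod (w i a b))\<^sup>2)"
  unfolding tensor_inner_def complex_norm_square of_real_sum ..

lemma sum_cmod_square_eq_0_iff:
  fixes w :: "'n::finite tensor"
  shows "(\<Sum>i\<in>UNIV. \<Sum>a\<in>UNIV. \<Sum>b\<in>UNIV. (cmod (w i a b))\<^sup>2) = 0 \<longleftrightarrow> w = 0"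
  by (simp add: sum_nonneg_eq_0_iff sum_nonneg fun_eq_iff)

lemma tensor_inner_act_out: "tensor_inner (act_out D x) y = tensor_inner x (act_out (adj D) y)"
proof -
  let ?f = "\<lambda>i a b l. D$i$l * x l a b * cnj (y i a b)"
  have "tensor_inner (act_out D x) y = (\<Sum>i\<in>UNIV. \<Sum>a\<in>UNIV. \<Sum>b\<in>UNIV. \<Sum>l\<in>UNIV. ?f i a b l)"
    by (simp add: tensor_inner_def act_out_def sum_distrib_right)
  also have "\<dots> = (\<Sum>i\<in>UNIV. \<Sum>l\<in>UNIV. \<Sum>a\<in>UNIV. \<Sum>b\<in>UNIV. ?f i a b l)"
    by (rule sum.cong[OF refl], rule sum_rotate3)
  also have "\<dots> = (\<Sum>l\<in>UNIV. \<Sum>i\<in>UNIV. \<Sum>a\<in>UNIV. \<Sum>b\<in>UNIV. ?f i a b l)"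
    by (rule sum.swap)
  also have "\<dots> = (\<Sum>l\<in>UNIV. \<Sum>a\<in>UNIV. \<Sum>b\<in>UNIV. \<Sum>i\<in>UNIV. ?f i a b l)"
    by (rule sum.cong[OF refl], rule sum_rotate3[symmetric])
  also have "\<dots> = tensor_inner x (act_out (adj D) y)"
    by (simp add: tensor_inner_def act_out_def adj_def sum_distrib_left ac_simps)
  finally show ?thesis .
qed

lemma tensor_inner_act_left: "tensor_inner (act_left D x) y = tensor_inner x (act_left (adj D) y)"
proof -
  let ?f = "\<lambda>i a b p. D$p$a * x i p b * cnj (y i a b)"
  have "tensor_inner (act_left D x) y = (\<Sum>i\<in>UNIV. \<Sum>a\<in>UNIV. \<Sum>b\<in>UNIV. \<Sum>p\<in>UNIV. ?f i a b p)"
    by (simp add: tensor_inner_def act_left_def sum_distrib_right)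
  also have "\<dots> = (\<Sum>i\<in>UNIV. \<Sum>p\<in>UNIV. \<Sum>a\<in>UNIV. \<Sum>b\<in>UNIV. ?f i a b p)"
    by (rule sum.cong[OF refl], rule sum_rotate3)
  also have "\<dots> = (\<Sum>i\<in>UNIV. \<Sum>p\<in>UNIV. \<Sum>b\<in>UNIV. \<Sum>a\<in>UNIV. ?f i a b p)"
    by (rule sum.cong[OF refl], rule sum.cong[OF refl], rule sum.swap)
  also have "\<dots> = tensor_inner x (act_left (adj D) y)"
    by (simp add: tensor_inner_def act_left_def adj_def sum_distrib_left ac_simps)
  finally show ?thesis .
qed

lemma tensor_inner_act_right: "tensor_inner (act_right D x) y = tensor_inner x (act_right (adj D) y)"
proof -
  let ?f = "\<lambda>i a b q. D$q$b * x i a q * cnj (y i a b)"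
  have "tensor_inner (act_right D x) y = (\<Sum>i\<in>UNIV. \<Sum>a\<in>UNIV. \<Sum>b\<in>UNIV. \<Sum>q\<in>UNIV. ?f i a b q)"
    by (simp add: tensor_inner_def act_right_def sum_distrib_right)
  also have "\<dots> = (\<Sum>i\<in>UNIV. \<Sum>a\<in>UNIV. \<Sum>q\<in>UNIV. \<Sum>b\<in>UNIV. ?f i a b q)"
    by (rule sum.cong[OF refl], rule sum.cong[OF refl], rule sum.swap)
  also have "\<dots> = tensor_inner x (act_right (adj D) y)"
    by (simp add: tensor_inner_def act_right_def adj_def sum_distrib_left ac_simps)
  finally show ?thesis .
qed

lemma tensor_inner_gl_action:
  "tensor_inner (gl_action D x) y = tensor_inner x (gl_action (adj D) y)"
  by (simp add: gl_action_def tensor_inner_diff_left tensor_inner_diff_right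
      tensor_inner_act_out tensor_inner_act_left tensor_inner_act_right)

subsection \<open>Derivations in coordinates\<close>

lemma cbilinear_sum_left:
  assumes "cbilinear mu"
  shows "mu (sum f S) Y = (\<Sum>a\<in>S. mu (f a) Y)"
proof (induction S rule: infinite_finite_induct)
  case (infinite S)
  have "mu (0 *s 0) Y = 0 *s mu 0 Y" using assms unfolding cbilinear_def by blast
  with infinite show ?case by simp
next
  case empty
  have "mu (0 *s 0) Y = 0 *s mu 0 Y" using assms unfolding cbilinear_def by blast
  thus ?case by simp
next
  case (insert x F)
  then show ?case using assms unfolding cbilinear_def by simp
qed

lemma cbilinear_sum_right:
  assumes "cbilinear mu"
  shows "mu X (sum f S) = (\<Sum>b\<in>S. mu X (f b))"
proof (induction S rule: infinite_finite_induct)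
  case (infinite S)
  have "mu X (0 *s 0) = 0 *s mu X 0" using assms unfolding cbilinear_def by blast
  with infinite show ?case by simp
next
  case empty
  have "mu X (0 *s 0) = 0 *s mu X 0" using assms unfolding cbilinear_def by blast
  thus ?case by simp
next
  case (insert x F)
  then show ?case using assms unfolding cbilinear_def by simp
qed

lemma cbilinear_component:
  assumes "cbilinear mu"
  shows "mu X Y $ i = (\<Sum>a\<in>UNIV. \<Sum>b\<in>UNIV. X$a * Y$b * structure_tensor mu i a b)"
proof -
  have "mu X Y = mu (\<Sum>a\<in>UNIV. X$a *s axis a 1) (\<Sum>b\<in>UNIV. Y$b *s axis b 1)"
    by (simp add: basis_expansion)
  also have "\<dots> = (\<Sum>a\<in>UNIV. \<Sum>b\<in>UNIV. (X$a * Y$b) *s mu (axis a 1) (axis b 1))"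
    using assms by (simp add: cbilinear_sum_left cbilinear_sum_right cbilinear_def
        vec_eq_iff sum_distrib_left mult.assoc mult.left_commute)
  finally show ?thesis by (simp add: structure_tensor_def mult.assoc)
qed

lemma bilinear_coefficients_eq_0_iff:
  fixes w :: "'n::finite \<Rightarrow> 'n \<Rightarrow> complex"
  shows "(\<forall>X Y :: complex^'n. (\<Sum>a\<in>UNIV. \<Sum>b\<in>UNIV. X$a * Y$b * w a b) = 0) \<longleftrightarrow> w = 0"
proof
  assume vanish: "\<forall>X Y :: complex^'n. (\<Sum>a\<in>UNIV. \<Sum>b\<in>UNIV. X$a * Y$b * w a b) = 0"
  have "w a b = 0" for a b
    using vanish[rule_format, of "axis a 1" "axis b 1"]
    by (simp add: mult.assoc sum_distrib_left[symmetric])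
      (simp add: axis_def if_distrib[of "\<lambda>x. x * _"] cong: if_cong)
  thus "w = 0" by (simp add: fun_eq_iff)
qed simp

lemma cbilinear_component_mult_out:
  assumes "cbilinear mu"
  shows "(D *v mu X Y) $ i
    = (\<Sum>a\<in>UNIV. \<Sum>b\<in>UNIV. X$a * Y$b * act_out D (structure_tensor mu) i a b)"
proof -
  let ?v = "structure_tensor mu"
  have "(D *v mu X Y) $ i = (\<Sum>l\<in>UNIV. \<Sum>a\<in>UNIV. \<Sum>b\<in>UNIV. X$a * Y$b * (D$i$l * ?v l a b))"
    by (simp add: matrix_vector_mult_def cbilinear_component[OF assms] sum_distrib_left ac_simps)
  also have "\<dots> = (\<Sum>a\<in>UNIV. \<Sum>b\<in>UNIV. \<Sum>l\<in>UNIV. X$a * Y$b * (D$i$l * ?v l a b))"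
    by (rule sum_rotate3[symmetric])
  also have "\<dots> = (\<Sum>a\<in>UNIV. \<Sum>b\<in>UNIV. X$a * Y$b * act_out D ?v i a b)"
    by (simp add: act_out_def sum_distrib_left)
  finally show ?thesis .
qed

lemma cbilinear_component_mult_left:
  assumes "cbilinear mu"
  shows "mu (D *v X) Y $ i
    = (\<Sum>a\<in>UNIV. \<Sum>b\<in>UNIV. X$a * Y$b * act_left D (structure_tensor mu) i a b)"
proof -
  let ?v = "structure_tensor mu"
  have "mu (D *v X) Y $ i = (\<Sum>p\<in>UNIV. \<Sum>b\<in>UNIV. \<Sum>a\<in>UNIV. X$a * Y$b * (D$p$a * ?v i p b))"
    by (simp add: matrix_vector_mult_def cbilinear_component[OF assms]
        sum_distrib_left sum_distrib_right ac_simps)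
  also have "\<dots> = (\<Sum>a\<in>UNIV. \<Sum>p\<in>UNIV. \<Sum>b\<in>UNIV. X$a * Y$b * (D$p$a * ?v i p b))"
    by (rule sum_rotate3)
  also have "\<dots> = (\<Sum>a\<in>UNIV. \<Sum>b\<in>UNIV. \<Sum>p\<in>UNIV. X$a * Y$b * (D$p$a * ?v i p b))"
    by (rule sum.cong[OF refl], rule sum.swap)
  also have "\<dots> = (\<Sum>a\<in>UNIV. \<Sum>b\<in>UNIV. X$a * Y$b * act_left D ?v i a b)"
    by (simp add: act_left_def sum_distrib_left)
  finally show ?thesis .
qed

lemma cbilinear_component_mult_right:
  assumes "cbilinear mu"
  shows "mu X (D *v Y) $ i
    = (\<Sum>a\<in>UNIV. \<Sum>b\<in>UNIV. X$a * Y$b * act_right D (structure_tensor mu) i a b)"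
proof -
  let ?v = "structure_tensor mu"
  have "mu X (D *v Y) $ i = (\<Sum>a\<in>UNIV. \<Sum>q\<in>UNIV. \<Sum>b\<in>UNIV. X$a * Y$b * (D$q$b * ?v i a q))"
    by (simp add: matrix_vector_mult_def cbilinear_component[OF assms]
        sum_distrib_left sum_distrib_right ac_simps)
  also have "\<dots> = (\<Sum>a\<in>UNIV. \<Sum>b\<in>UNIV. \<Sum>q\<in>UNIV. X$a * Y$b * (D$q$b * ?v i a q))"
    by (rule sum.cong[OF refl], rule sum.swap)
  also have "\<dots> = (\<Sum>a\<in>UNIV. \<Sum>b\<in>UNIV. X$a * Y$b * act_right D ?v i a b)"
    by (simp add: act_right_def sum_distrib_left)
  finally show ?thesis .
qed

lemma Der_iff_gl_action_eq_0:
  assumes "cbilinear mu"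
  shows "D \<in> Der mu \<longleftrightarrow> gl_action D (structure_tensor mu) = 0"
proof -
  have defect: "(D *v mu X Y - mu (D *v X) Y - mu X (D *v Y)) $ i
      = (\<Sum>a\<in>UNIV. \<Sum>b\<in>UNIV. X$a * Y$b * gl_action D (structure_tensor mu) i a b)" for X Y i
    by (simp add: cbilinear_component_mult_out[OF assms] cbilinear_component_mult_left[OF assms]
        cbilinear_component_mult_right[OF assms] gl_action_def sum_subtractf right_diff_distrib)
  have "D \<in> Der mu \<longleftrightarrow> (\<forall>i X Y. (D *v mu X Y - mu (D *v X) Y - mu X (D *v Y)) $ i = 0)"
    by (auto simp: Der_def vec_eq_iff algebra_simps)
  also have "\<dots> \<longleftrightarrow> (\<forall>i. gl_action D (structure_tensor mu) i = 0)"
    unfolding defect bilinear_coefficients_eq_0_iff ..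
  finally show ?thesis by (simp add: fun_eq_iff)
qed

subsection \<open>\<open>M\<^sub>\<mu>\<close> as a moment map\<close>

lemma trace_sum_Lop_mult_adj_Lop:
  "trace ((\<Sum>k\<in>UNIV. Lop mu (axis k 1) ** adj (Lop mu (axis k 1))) ** D)
    = tensor_inner (act_out D (structure_tensor mu)) (structure_tensor mu)"
proof -
  let ?v = "structure_tensor mu"
  let ?g = "\<lambda>i l k j. D$l$i * ?v i k j * cnj (?v l k j)"
  have "trace ((\<Sum>k\<in>UNIV. Lop mu (axis k 1) ** adj (Lop mu (axis k 1))) ** D)
      = (\<Sum>i\<in>UNIV. \<Sum>l\<in>UNIV. \<Sum>k\<in>UNIV. \<Sum>j\<in>UNIV. ?g i l k j)"
    by (simp add: trace_def matrix_matrix_mult_def Lop_def adj_def structure_tensor_def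
        sum_distrib_right sum_distrib_left ac_simps)
  also have "\<dots> = (\<Sum>l\<in>UNIV. \<Sum>i\<in>UNIV. \<Sum>k\<in>UNIV. \<Sum>j\<in>UNIV. ?g i l k j)"
    by (rule sum.swap)
  also have "\<dots> = (\<Sum>l\<in>UNIV. \<Sum>k\<in>UNIV. \<Sum>j\<in>UNIV. \<Sum>i\<in>UNIV. ?g i l k j)"
    by (rule sum.cong[OF refl], rule sum_rotate3[symmetric])
  also have "\<dots> = tensor_inner (act_out D ?v) ?v"
    by (simp add: tensor_inner_def act_out_def sum_distrib_right sum_distrib_left ac_simps)
  finally show ?thesis .
qed

lemma trace_sum_adj_Lop_mult_Lop:
  "trace ((\<Sum>k\<in>UNIV. adj (Lop mu (axis k 1)) ** Lop mu (axis k 1)) ** D)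
    = tensor_inner (act_right D (structure_tensor mu)) (structure_tensor mu)"
proof -
  let ?v = "structure_tensor mu"
  let ?g = "\<lambda>i l k j. D$l$i * ?v j k l * cnj (?v j k i)"
  have "trace ((\<Sum>k\<in>UNIV. adj (Lop mu (axis k 1)) ** Lop mu (axis k 1)) ** D)
      = (\<Sum>i\<in>UNIV. \<Sum>l\<in>UNIV. \<Sum>k\<in>UNIV. \<Sum>j\<in>UNIV. ?g i l k j)"
    by (simp add: trace_def matrix_matrix_mult_def Lop_def adj_def structure_tensor_def
        sum_distrib_right sum_distrib_left ac_simps)
  also have "\<dots> = (\<Sum>i\<in>UNIV. \<Sum>j\<in>UNIV. \<Sum>l\<in>UNIV. \<Sum>k\<in>UNIV. ?g i l k j)"
    by (rule sum.cong[OF refl], rule sum_rotate3)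
  also have "\<dots> = (\<Sum>j\<in>UNIV. \<Sum>k\<in>UNIV. \<Sum>i\<in>UNIV. \<Sum>l\<in>UNIV. ?g i l k j)"
    by (subst sum.swap, rule sum.cong[OF refl], rule sum_rotate3)
  also have "\<dots> = tensor_inner (act_right D ?v) ?v"
    by (simp add: tensor_inner_def act_right_def sum_distrib_right sum_distrib_left ac_simps)
  finally show ?thesis .
qed

lemma trace_sum_adj_Rop_mult_Rop:
  "trace ((\<Sum>k\<in>UNIV. adj (Rop mu (axis k 1)) ** Rop mu (axis k 1)) ** D)
    = tensor_inner (act_left D (structure_tensor mu)) (structure_tensor mu)"
proof -
  let ?v = "structure_tensor mu"
  let ?g = "\<lambda>i l k j. D$l$i * ?v j l k * cnj (?v j i k)"
  have "trace ((\<Sum>k\<in>UNIV. adj (Rop mu (axis k 1)) ** Rop mu (axis k 1)) ** D)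
      = (\<Sum>i\<in>UNIV. \<Sum>l\<in>UNIV. \<Sum>k\<in>UNIV. \<Sum>j\<in>UNIV. ?g i l k j)"
    by (simp add: trace_def matrix_matrix_mult_def Rop_def adj_def structure_tensor_def
        sum_distrib_right sum_distrib_left ac_simps)
  also have "\<dots> = (\<Sum>i\<in>UNIV. \<Sum>j\<in>UNIV. \<Sum>l\<in>UNIV. \<Sum>k\<in>UNIV. ?g i l k j)"
    by (rule sum.cong[OF refl], rule sum_rotate3)
  also have "\<dots> = (\<Sum>j\<in>UNIV. \<Sum>i\<in>UNIV. \<Sum>k\<in>UNIV. \<Sum>l\<in>UNIV. ?g i l k j)"
    by (subst sum.swap, rule sum.cong[OF refl], rule sum.cong[OF refl], rule sum.swap)
  also have "\<dots> = tensor_inner (act_left D ?v) ?v"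
    by (simp add: tensor_inner_def act_left_def sum_distrib_right sum_distrib_left ac_simps)
  finally show ?thesis .
qed

lemma trace_Mmu_mult:
  fixes D :: "complex^'n::finite^'n"
  shows "trace (Mmu mu ** D) = 2 * tensor_inner (gl_action D (structure_tensor mu)) (structure_tensor mu)"
proof -
  have trace_scaled_diff: "trace ((2 *\<^sub>R P - 2 *\<^sub>R Q - 2 *\<^sub>R R) ** D)
      = 2 * (trace (P ** D) - trace (Q ** D) - trace (R ** D))" for P Q R :: "complex^'n^'n"
    by (simp add: trace_def matrix_matrix_mult_def sum_subtractf sum_distrib_left sum.distrib
        algebra_simps scaleR_conv_of_real)
  show ?thesis
    unfolding Mmu_def trace_scaled_diff trace_sum_Lop_mult_adj_Lop trace_sum_adj_Lop_mult_Lop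
      trace_sum_adj_Rop_mult_Rop
    by (simp add: gl_action_def tensor_inner_diff_left)
qed

lemma trace_Mmu_commutator_adj:
  assumes "cbilinear mu" and "A \<in> Der mu"
  shows "trace (Mmu mu ** (A ** adj A - adj A ** A))
    = 2 * tensor_inner (gl_action (adj A) (structure_tensor mu)) (gl_action (adj A) (structure_tensor mu))"
proof -
  let ?v = "structure_tensor mu"
  have "gl_action A ?v = 0" using Der_iff_gl_action_eq_0[OF assms(1)] assms(2) by simp
  then have "gl_action (A ** adj A - adj A ** A) ?v = gl_action A (gl_action (adj A) ?v)"
    by (simp add: gl_action_commutator[symmetric])
  moreover have "adj (adj A) = A" by (simp add: adj_def vec_eq_iff)
  ultimately show ?thesis
    by (simp add: trace_Mmu_mult tensor_inner_gl_action)
qed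

theorem corollary3p2:
  fixes mu :: "complex^'n \<Rightarrow> complex^'n \<Rightarrow> complex^'n"
  assumes "mu \<in> Vn"
  shows "(\<forall>D \<in> Der mu. trace (Mmu mu ** D) = 0) \<and>
         (\<forall>A \<in> Der mu. trace (Mmu mu ** (A ** adj A - adj A ** A)) \<ge> 0 \<and>
            (trace (Mmu mu ** (A ** adj A - adj A ** A)) = 0 \<longleftrightarrow> adj A \<in> Der mu))"
proof (intro conjI ballI)
  have bil: "cbilinear mu" using assms by (simp add: Vn_def)
  show "trace (Mmu mu ** D) = 0" if "D \<in> Der mu" for D
    using that by (simp add: trace_Mmu_mult Der_iff_gl_action_eq_0[OF bil])
  fix A assume A: "A \<in> Der mu"
  define w where "w = gl_action (adj A) (structure_tensor mu)"
  define norm2 where "norm2 = (\<Sum>i\<in>UNIV. \<Sum>a\<in>UNIV. \<Sum>b\<in>UNIV. (cmod (w i a b))\<^sup>2)"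
  have trace_eq: "trace (Mmu mu ** (A ** adj A - adj A ** A)) = 2 * complex_of_real norm2"
    by (simp add: trace_Mmu_commutator_adj[OF bil A] tensor_inner_self w_def norm2_def)
  have "norm2 \<ge> 0" by (simp add: norm2_def sum_nonneg)
  then show "trace (Mmu mu ** (A ** adj A - adj A ** A)) \<ge> 0"
    by (simp add: trace_eq less_eq_complex_def)
  have "adj A \<in> Der mu \<longleftrightarrow> norm2 = 0"
    by (simp add: Der_iff_gl_action_eq_0[OF bil] norm2_def sum_cmod_square_eq_0_iff w_def)
  then show "trace (Mmu mu ** (A ** adj A - adj A ** A)) = 0 \<longleftrightarrow> adj A \<in> Der mu"
    by (simp add: trace_eq)
qed

end
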